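(* Let $m\ge2$, $f_1,\dots,f_m:X\to\mathbb R_{+\infty}$, $x\in\bigcap_{i=1}^m\operatorname{dom} f_i$, and suppose the zero function $0$ belongs to $\mathcal L$. The following are equivalent: (i) $0\in\bigcap_{\varepsilon>0}\sum_{i=1}^m\partial_\varepsilon f_i(x)$; (ii) $\left(\sum_{i=1}^m f_i\right)^*(0)=(f_1^*\square\cdots\square f_m^* )(0)<+\infty$, and $x$ minimizes $\sum_{i=1}^m f_i$ over $X$.
   Context: $X$ is a nonempty set; $\mathbb R_{+\infty}=\mathbb R\cup\{+\infty\}$. A space of abstract linear functions is a family $\mathcal L$ of functions $l:X\to\mathbb R$ such that (a) $l_1,l_2\in\mathcal L$ implies $l_1+l_2\in\mathcal L$, and (b) for every $l\in\mathcal L$ and $m\in\mathbb N$ there exist $l_1,\dots,l_m\in\mathcal L$ with $l=l_1+\dots+l_m$. For $f:X\to\mathbb R_{+\infty}$: $\operatorname{dom} f=\{x:f(x)<+\infty\}$; $f^*(l)=\sup_{x\in X}(l(x)-f(x))$. Infimal convolution: $(g_1\square\cdots\square g_m)(l)=\inf\{\sum_i g_i(l_i):l_i\in\mathcal L,\ \sum_i l_i=l\}$. For $\varepsilon\ge0$ and $x\in\operatorname{dom} f$, $\partial_\varepsilon f(x)=\{l\in\mathcal L: f(y)-f(x)-(l(y)-l(x))+\varepsilon\ge0\ \forall y\in X\}$. Sums of subsets of $\mathcal L$ are Minkowski sums. *)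

theory Defs
  imports "HOL-Library.Extended_Real"
begin

text \<open>Functions X -> R u {+oo} are modelled as 'a => ereal that never take the value -oo.\<close>

definition abstract_linear_space :: "('a \<Rightarrow> real) set \<Rightarrow> bool" where
  "abstract_linear_space L \<longleftrightarrow>
     (\<forall>l1\<in>L. \<forall>l2\<in>L. (\<lambda>y. l1 y + l2 y) \<in> L) \<and>
     (\<forall>l\<in>L. \<forall>k::nat. k \<ge> 1 \<longrightarrow>
        (\<exists>ls. (\<forall>j<k. ls j \<in> L) \<and> l = (\<lambda>y. \<Sum>j<k. ls j y)))"

definition edom :: "('a \<Rightarrow> ereal) \<Rightarrow> 'a set" where
  "edom f = {x. f x < \<infinity>}"

definition conj :: "('a \<Rightarrow> ereal) \<Rightarrow> ('a \<Rightarrow> real) \<Rightarrow> ereal" where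
  "conj f l = (SUP x. ereal (l x) - f x)"

definition infconv :: "('a \<Rightarrow> real) set \<Rightarrow> nat \<Rightarrow> (nat \<Rightarrow> ('a \<Rightarrow> real) \<Rightarrow> ereal)
                        \<Rightarrow> ('a \<Rightarrow> real) \<Rightarrow> ereal" where
  "infconv L m g l = Inf {(\<Sum>i<m. g i (ls i)) | ls.
       (\<forall>i<m. ls i \<in> L) \<and> (\<lambda>y. \<Sum>i<m. ls i y) = l}"

definition eps_subdiff :: "('a \<Rightarrow> real) set \<Rightarrow> real \<Rightarrow> ('a \<Rightarrow> ereal) \<Rightarrow> 'a \<Rightarrow> ('a \<Rightarrow> real) set" where
  "eps_subdiff L \<epsilon> f x = {l \<in> L. \<forall>y. f y - f x - ereal (l y - l x) + ereal \<epsilon> \<ge> 0}"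

definition msum :: "nat \<Rightarrow> (nat \<Rightarrow> ('a \<Rightarrow> real) set) \<Rightarrow> ('a \<Rightarrow> real) set" where
  "msum m S = {(\<lambda>y. \<Sum>i<m. ls i y) | ls. \<forall>i<m. ls i \<in> S i}"

end

theory Submission
  imports Defs
begin

text \<open>Write \<open>F = f\<^sub>1 + \<dots> + f\<^sub>m\<close>. By Fenchel--Young, \<open>-F x \<le> F\<^sup>*(0) \<le> (f\<^sub>1\<^sup>* \<box> \<dots> \<box> f\<^sub>m\<^sup>*)(0)\<close>
  always, and \<open>F\<^sup>*(0) = -F x\<close> says exactly that \<open>x\<close> minimizes \<open>F\<close>. On the other hand
  \<open>l \<in> \<partial>\<^sub>\<epsilon>f(x)\<close> means \<open>f\<^sup>*(l) \<le> l(x) - f(x) + \<epsilon>\<close>, so decompositions \<open>0 = l\<^sub>1 + \<dots> + l\<^sub>m\<close>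
  into \<open>\<epsilon>\<close>-subgradients are decompositions whose value \<open>\<Sum>f\<^sub>i\<^sup>*(l\<^sub>i)\<close> exceeds \<open>-F x\<close>
  by at most \<open>m\<epsilon>\<close>, while a decomposition within \<open>\<epsilon>\<close> of \<open>-F x\<close> consists of
  \<open>\<epsilon>\<close>-subgradients because each summand has nonnegative slack. Hence (i) says that the
  infimal convolution at \<open>0\<close> equals \<open>-F x\<close>, which by the sandwich is (ii).\<close>

lemma conj_ge: "ereal (l y) - f y \<le> conj f l"
  unfolding conj_def by (rule SUP_upper) simp

lemma conj_le_iff: "conj f l \<le> c \<longleftrightarrow> (\<forall>y. ereal (l y) - f y \<le> c)"
  unfolding conj_def by (simp add: SUP_le_iff)

lemma eps_subdiff_iff_conj_le:
  assumes "\<bar>f x\<bar> \<noteq> \<infinity>"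
  shows "l \<in> eps_subdiff L \<epsilon> f x \<longleftrightarrow> l \<in> L \<and> conj f l \<le> ereal (l x) - f x + ereal \<epsilon>"
proof -
  obtain r where r: "f x = ereal r" using assms by (cases "f x") auto
  have "f y - f x - ereal (l y - l x) + ereal \<epsilon> \<ge> 0 \<longleftrightarrow>
        ereal (l y) - f y \<le> ereal (l x) - f x + ereal \<epsilon>" for y
    by (cases "f y") (auto simp: r)
  then show ?thesis unfolding eps_subdiff_def conj_le_iff by auto
qed

lemma neg_le_conj_zero: "- F x \<le> conj F (\<lambda>y. 0)"
  using conj_ge[of "\<lambda>y. 0" x F] by (simp add: zero_ereal_def[symmetric])

lemma conj_zero_eq_iff_minimizer:
  assumes "\<bar>F x\<bar> \<noteq> \<infinity>"
  shows "conj F (\<lambda>y. 0) = - F x \<longleftrightarrow> (\<forall>y. F x \<le> F y)"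
proof -
  have "ereal 0 - F y \<le> - F x \<longleftrightarrow> F x \<le> F y" for y
    using assms by (cases "F x"; cases "F y") auto
  then have "conj F (\<lambda>y. 0) \<le> - F x \<longleftrightarrow> (\<forall>y. F x \<le> F y)"
    unfolding conj_le_iff by simp
  then show ?thesis using neg_le_conj_zero[of F x] by auto
qed

lemma conj_sum_le_sum_conj:
  fixes m :: nat
  assumes "\<And>i y. i < m \<Longrightarrow> f i y \<noteq> -\<infinity>"
  shows "conj (\<lambda>y. \<Sum>i<m. f i y) (\<lambda>y. \<Sum>i<m. ls i y) \<le> (\<Sum>i<m. conj (f i) (ls i))"
  unfolding conj_le_iff
proof
  fix y
  show "ereal (\<Sum>i<m. ls i y) - (\<Sum>i<m. f i y) \<le> (\<Sum>i<m. conj (f i) (ls i))"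
  proof (cases "(\<Sum>i<m. f i y) = \<infinity>")
    case False
    define s where "s i = real_of_ereal (f i y)" for i
    have fs: "f i y = ereal (s i)" if "i < m" for i
      using assms False sum_Pinfty[of "\<lambda>i. f i y" "{..<m}"] that
      unfolding s_def by (cases "f i y") auto
    have "(\<Sum>i<m. f i y) = ereal (\<Sum>i<m. s i)"
      using fs by (simp add: sum.cong[of "{..<m}" _ _ "\<lambda>i. ereal (s i)"])
    moreover have "(\<Sum>i<m. ereal (ls i y) - f i y) = ereal (\<Sum>i<m. ls i y - s i)"
      using fs by (simp add: sum.cong[of "{..<m}" _ _ "\<lambda>i. ereal (ls i y - s i)"])
    ultimately have "ereal (\<Sum>i<m. ls i y) - (\<Sum>i<m. f i y) = (\<Sum>i<m. ereal (ls i y) - f i y)"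
      by (simp add: sum_subtractf)
    also have "\<dots> \<le> (\<Sum>i<m. conj (f i) (ls i))"
      by (rule sum_mono) (rule conj_ge)
    finally show ?thesis .
  qed simp
qed

lemma conj_sum_le_infconv:
  assumes "\<And>i y. i < m \<Longrightarrow> f i y \<noteq> -\<infinity>"
  shows "conj (\<lambda>y. \<Sum>i<m. f i y) l \<le> infconv L m (\<lambda>i. conj (f i)) l"
  unfolding infconv_def
proof (rule Inf_greatest, clarify)
  fix ls
  show "conj (\<lambda>y. \<Sum>i<m. f i y) (\<lambda>y. \<Sum>i<m. ls i y) \<le> (\<Sum>i<m. conj (f i) (ls i))"
    using assms by (rule conj_sum_le_sum_conj)
qed

lemma ereal_sum_slack_lt:
  fixes b :: "nat \<Rightarrow> ereal"
  assumes "finite I" "j \<in> I" "\<And>i. i \<in> I \<Longrightarrow> ereal (a i) \<le> b i"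
    and "sum b I < ereal (sum a I + e)"
  shows "b j < ereal (a j + e)"
proof -
  define c where "c i = real_of_ereal (b i)" for i
  have "sum b I \<noteq> \<infinity>" using assms(4) by auto
  then have bc: "b i = ereal (c i)" if "i \<in> I" for i
    using assms(1) assms(3)[OF that] sum_Pinfty[of b I] that unfolding c_def by (cases "b i") auto
  then have "sum b I = ereal (sum c I)" by (simp add: sum.cong[of I _ _ "\<lambda>i. ereal (c i)"])
  then have "(\<Sum>i\<in>I. c i - a i) < e" using assms(4) by (simp add: sum_subtractf)
  moreover have "c j - a j \<le> (\<Sum>i\<in>I. c i - a i)"
    using assms(1,2,3) bc by (intro member_le_sum) fastforce+
  ultimately show ?thesis using bc[OF assms(2)] by simp
qed

lemma zero_in_sum_eps_subdiff_iff_infconv_le: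
  assumes fin: "\<And>i. i < m \<Longrightarrow> \<bar>f i x\<bar> \<noteq> \<infinity>"
  shows "(\<forall>\<epsilon>>0. (\<lambda>y. 0) \<in> msum m (\<lambda>i. eps_subdiff L \<epsilon> (f i) x))
     \<longleftrightarrow> infconv L m (\<lambda>i. conj (f i)) (\<lambda>y. 0) \<le> - (\<Sum>i<m. f i x)"
proof -
  define r where "r i = real_of_ereal (f i x)" for i
  have r: "f i x = ereal (r i)" if "i < m" for i
    using fin[OF that] unfolding r_def by (cases "f i x") auto
  have Fx: "(\<Sum>i<m. f i x) = ereal (\<Sum>i<m. r i)"
    using r by (simp add: sum.cong[of "{..<m}" _ "\<lambda>i. f i x" "\<lambda>i. ereal (r i)"])
  have sum_zero: "(\<Sum>i<m. ls i x) = 0" if "(\<lambda>y. \<Sum>i<m. ls i y) = (\<lambda>y. 0)" for ls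
    using fun_cong[OF that, of x] by simp
  have subgrad_iff: "ls i \<in> eps_subdiff L \<epsilon> (f i) x \<longleftrightarrow>
      ls i \<in> L \<and> conj (f i) (ls i) \<le> ereal (ls i x - r i + \<epsilon>)" if "i < m" for ls i \<epsilon>
    using eps_subdiff_iff_conj_le[of "f i" x, OF fin[OF that]] r[OF that] by simp
  show ?thesis
  proof
    assume subgrads: "\<forall>\<epsilon>>0. (\<lambda>y. 0) \<in> msum m (\<lambda>i. eps_subdiff L \<epsilon> (f i) x)"
    show "infconv L m (\<lambda>i. conj (f i)) (\<lambda>y. 0) \<le> - (\<Sum>i<m. f i x)"
    proof (rule ereal_le_epsilon2)
      fix e :: real assume "e > 0"
      then have "e / m > 0" if "m > 0" using that by simp
      then obtain ls where ls: "\<forall>i<m. ls i \<in> eps_subdiff L (e / m) (f i) x"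
        and ls0: "(\<lambda>y. \<Sum>i<m. ls i y) = (\<lambda>y. 0)"
        using subgrads unfolding msum_def by (cases "m = 0") force+
      have "infconv L m (\<lambda>i. conj (f i)) (\<lambda>y. 0) \<le> (\<Sum>i<m. conj (f i) (ls i))"
        unfolding infconv_def
        by (rule Inf_lower) (use ls ls0 in \<open>auto simp: eps_subdiff_def\<close>)
      also have "\<dots> \<le> (\<Sum>i<m. ereal (ls i x - r i + e / m))"
        by (rule sum_mono) (use ls subgrad_iff in auto)
      also have "\<dots> \<le> - (\<Sum>i<m. f i x) + ereal e"
        using sum_zero[OF ls0] Fx \<open>e > 0\<close> by (simp add: sum.distrib sum_subtractf)
      finally show "infconv L m (\<lambda>i. conj (f i)) (\<lambda>y. 0) \<le> - (\<Sum>i<m. f i x) + ereal e" .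
    qed
  next
    assume le: "infconv L m (\<lambda>i. conj (f i)) (\<lambda>y. 0) \<le> - (\<Sum>i<m. f i x)"
    show "\<forall>\<epsilon>>0. (\<lambda>y. 0) \<in> msum m (\<lambda>i. eps_subdiff L \<epsilon> (f i) x)"
    proof (intro allI impI)
      fix e :: real assume "e > 0"
      then have "infconv L m (\<lambda>i. conj (f i)) (\<lambda>y. 0) < ereal (- (\<Sum>i<m. r i) + e)"
        using le Fx by (simp add: le_less_trans)
      then obtain ls where lsL: "\<forall>i<m. ls i \<in> L" and ls0: "(\<lambda>y. \<Sum>i<m. ls i y) = (\<lambda>y. 0)"
        and lt: "(\<Sum>i<m. conj (f i) (ls i)) < ereal (- (\<Sum>i<m. r i) + e)"
        unfolding infconv_def Inf_less_iff by blast
      then have lt': "(\<Sum>i<m. conj (f i) (ls i)) < ereal ((\<Sum>i<m. ls i x - r i) + e)"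
        using sum_zero[OF ls0] by (simp add: sum_subtractf)
      have "conj (f i) (ls i) < ereal (ls i x - r i + e)" if "i < m" for i
      proof (rule ereal_sum_slack_lt[where I="{..<m}" and b="\<lambda>i. conj (f i) (ls i)"])
        show "ereal (ls i x - r i) \<le> conj (f i) (ls i)" if "i \<in> {..<m}" for i
          using conj_ge[of "ls i" x "f i"] r that by simp
      qed (use lt' that in auto)
      then have "ls i \<in> eps_subdiff L e (f i) x" if "i < m" for i
        using subgrad_iff lsL that by (auto intro: less_imp_le)
      then show "(\<lambda>y. 0) \<in> msum m (\<lambda>i. eps_subdiff L e (f i) x)"
        unfolding msum_def using ls0 by (auto intro!: exI[of _ ls])
    qed
  qed
qed

theorem mainTheorem6:
  fixes L :: "('a \<Rightarrow> real) set" and m :: nat and f :: "nat \<Rightarrow> 'a \<Rightarrow> ereal" and x :: 'a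
  assumes "abstract_linear_space L"
    and "m \<ge> 2"
    and "\<And>i y. i < m \<Longrightarrow> f i y \<noteq> -\<infinity>"
    and "\<And>i. i < m \<Longrightarrow> x \<in> edom (f i)"
    and "(\<lambda>y. 0) \<in> L"
  shows "(\<forall>\<epsilon>>0. (\<lambda>y. 0) \<in> msum m (\<lambda>i. eps_subdiff L \<epsilon> (f i) x))
     \<longleftrightarrow> (conj (\<lambda>y. \<Sum>i<m. f i y) (\<lambda>y. 0) = infconv L m (\<lambda>i. conj (f i)) (\<lambda>y. 0)
          \<and> conj (\<lambda>y. \<Sum>i<m. f i y) (\<lambda>y. 0) < \<infinity>
          \<and> (\<forall>y. (\<Sum>i<m. f i x) \<le> (\<Sum>i<m. f i y)))"
proof -
  define F where "F y = (\<Sum>i<m. f i y)" for y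
  have fin: "\<bar>f i x\<bar> \<noteq> \<infinity>" if "i < m" for i
    using assms(3,4)[OF that] unfolding edom_def by auto
  then have Fx: "\<bar>F x\<bar> \<noteq> \<infinity>"
    unfolding F_def sum_Inf by auto
  note neg_le_conj_zero[of F x]
  moreover have "conj F (\<lambda>y. 0) \<le> infconv L m (\<lambda>i. conj (f i)) (\<lambda>y. 0)"
    unfolding F_def by (rule conj_sum_le_infconv) (use assms(3) in auto)
  ultimately show ?thesis
    using zero_in_sum_eps_subdiff_iff_infconv_le[of m f x L, OF fin]
      conj_zero_eq_iff_minimizer[of F x, OF Fx] Fx
    unfolding F_def[symmetric] by (cases "F x") auto
qed

end
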